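(* Let $p$ be a prime, let $G$ be a finite Abelian $p$-group, and let $S$ be a sequence over $G$ with $|S|=\mathsf{D}(G)+i-1$, where $i\ge 1$ is an integer. Then: (i) If $i\ge 2$ and $S$ contains a zero-sum subsequence $S'$ with $p\nmid |S'|$, then $S$ is dispersive. (ii) If $S$ contains no non-empty zero-sum subsequence $S'$ with $p\mid |S'|$, then $i\le p-1$, and $S$ contains at least $i$ non-empty zero-sum subsequences with pairwise distinct lengths.
   Context: A sequence over a finite Abelian group $G$ (written additively) is a finite multiset of elements of $G$; its length $|S|$ is the number of terms counted with multiplicity, and a subsequence is a sub-multiset. A zero-sum sequence is one whose terms sum to $0$. The Davenport constant $\mathsf{D}(G)$ is the smallest positive integer $t$ such that every sequence over $G$ of length at least $t$ contains a non-empty zero-sum subsequence. A sequence $S$ over $G$ is dispersive if it contains two non-empty zero-sum subsequences $S_1,S_2$ with $|S_1|\neq|S_2|$. *)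

theory Defs
  imports Main "HOL-Library.Multiset" "HOL-Computational_Algebra.Primes"
begin

text \<open>A finite Abelian group is modelled as a type of class finite and ab_group_add;
  sequences over it are multisets, subsequences are sub-multisets.\<close>

definition zero_sum :: "'a::ab_group_add multiset \<Rightarrow> bool" where
  "zero_sum T \<longleftrightarrow> sum_mset T = 0"

definition davenport :: "'a::{finite,ab_group_add} itself \<Rightarrow> nat" where
  "davenport _ = (LEAST t::nat. 0 < t \<and>
     (\<forall>S::'a multiset. t \<le> size S \<longrightarrow>
        (\<exists>T. T \<subseteq># S \<and> T \<noteq> {#} \<and> zero_sum T)))"

definition dispersive :: "'a::ab_group_add multiset \<Rightarrow> bool" where
  "dispersive S \<longleftrightarrow> (\<exists>S1 S2. S1 \<subseteq># S \<and> S2 \<subseteq># S \<and> S1 \<noteq> {#} \<and> S2 \<noteq> {#}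
      \<and> zero_sum S1 \<and> zero_sum S2 \<and> size S1 \<noteq> size S2)"

end

(*
  Index the sequence S by a set U of n = D(G) + i - 1 positions. By Olson's theorem, D(G) = 1 + \<Sum>(p^\<alpha>_j - 1)
  for G = \<Oplus> Z/p^\<alpha>_j, and every index set J with |J| \<ge> D(G) has alternating count
  \<Sum>{(-1)^|I| | I \<subseteq> J zero-sum} \<equiv> 0 (mod p); this is the constant coefficient of \<Prod>_{j \<in> J} (1 - X^{x_j}) in the
  group ring, which lies in p\<int>[G]. Summing over all J \<subseteq> U with |J| = n - t, t < i, gives
  \<Sum>_I (-1)^|I| binom(n - |I|, t) \<equiv> 0 over the zero-sum sets I \<subseteq> U, hence \<Sum>_I (-1)^|I| f(|I|) \<equiv> 0 for every
  integer polynomial f of degree < i. Choosing f = \<Prod>_{l \<in> L} (X - l) for a set L of fewer than i integers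
  that contains, modulo p, the lengths of all non-empty zero-sum subsequences kills every term except the
  one for I = {}, so p divides some l \<in> L. The three choices L = {|S'|}, L = {1, ..., p - 1} and
  L = {lengths of zero-sum subsequences} give dispersiveness, i \<le> p - 1 and the i distinct lengths.
*)

theory Submission
  imports Defs "HOL-Library.Poly_Mapping"
begin

section \<open>Multiples and subgroups in finite abelian groups\<close>

primrec ntimes :: "nat \<Rightarrow> 'a::ab_group_add \<Rightarrow> 'a" where
  "ntimes 0 x = 0"
| "ntimes (Suc n) x = x + ntimes n x"

lemma ntimes_add: "ntimes (m + n) x = ntimes m x + ntimes n x"
  by (induct m) (simp_all add: add.assoc)

lemma ntimes_mult: "ntimes (m * n) x = ntimes m (ntimes n x)"
  by (induct m) (simp_all add: ntimes_add)

lemma ntimes_plus: "ntimes n (x + y) = ntimes n x + ntimes n y"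
  by (induct n) (simp_all add: algebra_simps)

lemma ntimes_zero [simp]: "ntimes n 0 = 0"
  by (induct n) simp_all

lemma ntimes_minus: "ntimes n (- x) = - ntimes n x"
  by (induct n) (simp_all add: algebra_simps)

lemma ntimes_diff: "ntimes n (x - y) = ntimes n x - ntimes n y"
  using ntimes_plus[of n x "- y"] by (simp add: ntimes_minus)

lemma ntimes_eq_0_dvd: "ntimes g a = 0 \<Longrightarrow> g dvd m \<Longrightarrow> ntimes m a = 0"
  by (auto simp: mult.commute[of g] ntimes_mult elim!: dvdE)

lemma sum_const_ntimes: "finite A \<Longrightarrow> (\<Sum>_\<in>A. x) = ntimes (card A) x"
  by (induct A rule: finite_induct) simp_all

lemma sum_mset_replicate_mset: "sum_mset (replicate_mset n x) = ntimes n x"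
  by (induct n) simp_all

lemma ntimes_card_UNIV:
  fixes x :: "'a::{finite,ab_group_add}"
  shows "ntimes (card (UNIV :: 'a set)) x = 0"
proof -
  have "(\<Sum>g\<in>(UNIV :: 'a set). g) = (\<Sum>g\<in>UNIV. x + g)"
    by (rule sum.reindex_bij_witness[where i="\<lambda>g. x + g" and j="\<lambda>g. g - x"]) auto
  also have "\<dots> = ntimes (card (UNIV :: 'a set)) x + (\<Sum>g\<in>UNIV. g)"
    by (simp add: sum.distrib sum_const_ntimes)
  finally show ?thesis by simp
qed

lemma ntimes_eq_0_iff_dvd:
  assumes "prime p" "ntimes (p ^ n) a = 0" "ntimes (p ^ (n - 1)) a \<noteq> 0"
  shows "ntimes m a = 0 \<longleftrightarrow> p ^ n dvd m"
proof
  assume m: "ntimes m a = 0"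
  show "p ^ n dvd m"
  proof (cases "m = 0")
    case False
    then obtain u v where uv: "m * u = p ^ n * v + gcd m (p ^ n)"
      using bezout_nat by blast
    have "ntimes (m * u) a = 0" "ntimes (p ^ n * v) a = 0"
      using ntimes_eq_0_dvd[OF m, of "m * u"] ntimes_eq_0_dvd[OF assms(2), of "p ^ n * v"]
      by (simp_all only: dvd_triv_left)
    then have "ntimes (gcd m (p ^ n)) a = 0"
      by (simp add: uv ntimes_add)
    moreover obtain b where b: "b \<le> n" "gcd m (p ^ n) = p ^ b"
      using divides_primepow_nat[OF assms(1), of "gcd m (p ^ n)" n] by auto
    ultimately have "b = n"
      using assms(3) ntimes_eq_0_dvd[of "p ^ b" a "p ^ (n - 1)"] le_imp_power_dvd[of b "n - 1" p]
      by (cases "b = n") auto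
    then show ?thesis
      using b(2) by (metis gcd_dvd1)
  qed simp
next
  assume "p ^ n dvd m"
  then show "ntimes m a = 0"
    using assms(2) ntimes_eq_0_dvd by blast
qed

definition add_submonoid :: "'a::monoid_add set \<Rightarrow> bool" where
  "add_submonoid H \<longleftrightarrow> 0 \<in> H \<and> (\<forall>x\<in>H. \<forall>y\<in>H. x + y \<in> H)"

lemma add_submonoid_zero: "add_submonoid H \<Longrightarrow> 0 \<in> H"
  by (simp add: add_submonoid_def)

lemma add_submonoid_add: "add_submonoid H \<Longrightarrow> x \<in> H \<Longrightarrow> y \<in> H \<Longrightarrow> x + y \<in> H"
  by (simp add: add_submonoid_def)

lemma add_submonoid_ntimes: "add_submonoid H \<Longrightarrow> x \<in> H \<Longrightarrow> ntimes n x \<in> H"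
  by (induct n) (simp_all add: add_submonoid_zero add_submonoid_add)

lemma add_submonoid_sum: "add_submonoid H \<Longrightarrow> (\<And>j. j \<in> J \<Longrightarrow> f j \<in> H) \<Longrightarrow> sum f J \<in> H"
  by (induct J rule: infinite_finite_induct) (simp_all add: add_submonoid_zero add_submonoid_add)

text \<open>In a finite group every additive submonoid is a subgroup, since \<open>- x\<close> is a multiple of \<open>x\<close>.\<close>

lemma add_submonoid_uminus:
  assumes "add_submonoid H" "(x :: 'a::{finite,ab_group_add}) \<in> H"
  shows "- x \<in> H"
proof -
  let ?N = "card (UNIV :: 'a set)"
  have "?N > 0"
    by (simp add: finite_UNIV_card_ge_0)
  then have "?N = Suc (?N - 1)"
    by simp
  then have "x + ntimes (?N - 1) x = 0"
    using ntimes_card_UNIV[of x] by (metis ntimes.simps(2))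
  then have "- x = ntimes (?N - 1) x"
    by (metis add.inverse_unique)
  then show ?thesis
    using add_submonoid_ntimes[OF assms] by simp
qed

lemma add_submonoid_diff:
  "add_submonoid H \<Longrightarrow> (x :: 'a::{finite,ab_group_add}) \<in> H \<Longrightarrow> y \<in> H \<Longrightarrow> x - y \<in> H"
  using add_submonoid_add[of H x "- y"] add_submonoid_uminus[of H y] by simp

lemma add_submonoid_coprime_multiples:
  fixes z :: "'a::{finite,ab_group_add}"
  assumes M: "add_submonoid M" and rq: "coprime r q"
    and r: "ntimes r z \<in> M" and q: "ntimes q z \<in> M"
  shows "z \<in> M"
proof (cases "r = 0")
  case True
  then show ?thesis
    using rq q by simp
next
  case False
  then obtain u v where uv: "r * u = q * v + 1"
    using bezout_nat[OF False, of q] rq by auto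
  have "z = ntimes u (ntimes r z) - ntimes v (ntimes q z)"
    using arg_cong[OF uv, of "\<lambda>m. ntimes m z"]
    by (simp add: ntimes_mult[symmetric] ntimes_add mult.commute)
  also have "\<dots> \<in> M"
    by (rule add_submonoid_diff[OF M add_submonoid_ntimes[OF M r] add_submonoid_ntimes[OF M q]])
  finally show ?thesis .
qed

section \<open>Bases of finite abelian \<open>p\<close>-groups\<close>

abbreviation multiples :: "'a::ab_group_add \<Rightarrow> 'a set" where
  "multiples a \<equiv> range (\<lambda>m. ntimes m a)"

definition adjoin :: "'a::ab_group_add set \<Rightarrow> 'a \<Rightarrow> 'a set" where
  "adjoin K a = {\<kappa> + ntimes m a | \<kappa> m. \<kappa> \<in> K}"

lemma adjoinI: "\<kappa> \<in> K \<Longrightarrow> \<kappa> + ntimes m a \<in> adjoin K a"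
  unfolding adjoin_def by blast

lemma adjoinE:
  assumes "x \<in> adjoin K a"
  obtains \<kappa> m where "\<kappa> \<in> K" "x = \<kappa> + ntimes m a"
  using assms unfolding adjoin_def by blast

lemma subset_adjoin: "K \<subseteq> adjoin K a"
  using adjoinI[of _ K 0 a] by auto

lemma multiples_subset_adjoin: "0 \<in> K \<Longrightarrow> multiples a \<subseteq> adjoin K a"
  using adjoinI[of 0 K] by auto

lemma adjoin_subset: "add_submonoid H \<Longrightarrow> K \<subseteq> H \<Longrightarrow> a \<in> H \<Longrightarrow> adjoin K a \<subseteq> H"
  by (auto elim!: adjoinE intro!: add_submonoid_add add_submonoid_ntimes)

lemma add_submonoid_adjoin:
  assumes "add_submonoid K"
  shows "add_submonoid (adjoin K a)"
  unfolding add_submonoid_def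
proof (intro conjI ballI)
  show "0 \<in> adjoin K a"
    using adjoinI[OF add_submonoid_zero[OF assms], of 0 a] by simp
next
  fix x y assume "x \<in> adjoin K a" "y \<in> adjoin K a"
  then obtain \<kappa> \<mu> m n where "\<kappa> \<in> K" "\<mu> \<in> K" "x = \<kappa> + ntimes m a" "y = \<mu> + ntimes n a"
    by (auto elim!: adjoinE)
  then show "x + y \<in> adjoin K a"
    using adjoinI[OF add_submonoid_add[OF assms], of \<kappa> \<mu> "m + n" a]
    by (simp add: ntimes_add algebra_simps)
qed

lemma multiples_Int_adjoin:
  fixes a z :: "'a::{finite,ab_group_add}"
  assumes p: "prime p" and K: "add_submonoid K" and aK: "multiples a \<inter> K = {0}"
    and pz: "ntimes p z \<in> K" and z: "z \<notin> adjoin K a"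
  shows "multiples a \<inter> adjoin K z = {0}"
proof -
  have "w = 0" if w: "w \<in> multiples a" "w \<in> adjoin K z" for w
  proof -
    obtain \<kappa> t where \<kappa>: "\<kappa> \<in> K" and wt: "w = \<kappa> + ntimes t z"
      using w(2) by (rule adjoinE)
    show "w = 0"
    proof (cases "p dvd t")
      case True
      then obtain t' where t: "t = p * t'" ..
      have "ntimes t z = ntimes t' (ntimes p z)"
        unfolding t using ntimes_mult[of t' p z] by (simp add: mult.commute)
      then have "w \<in> K"
        using wt \<kappa> pz K by (simp add: add_submonoid_add add_submonoid_ntimes)
      then show ?thesis
        using w(1) aK by blast
    next
      case False
      have M: "add_submonoid (adjoin K a)"
        using K by (rule add_submonoid_adjoin)
      have "ntimes t z = w - \<kappa>"
        using wt by simp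
      also have "\<dots> \<in> adjoin K a"
        using add_submonoid_diff[OF M] w(1) \<kappa> subset_adjoin
          multiples_subset_adjoin[OF add_submonoid_zero[OF K]] by blast
      finally have "z \<in> adjoin K a"
        using add_submonoid_coprime_multiples[OF M] pz subset_adjoin False p
        by (metis coprime_commute prime_imp_coprime subsetD)
      with z show ?thesis
        by contradiction
    qed
  qed
  moreover have "0 \<in> multiples a \<inter> adjoin K z"
    using subset_adjoin add_submonoid_zero[OF K] by (auto intro: range_eqI[of _ _ 0])
  ultimately show ?thesis
    by blast
qed

definition avoiding_subgroup :: "'a::ab_group_add set \<Rightarrow> 'a \<Rightarrow> 'a set \<Rightarrow> bool" where
  "avoiding_subgroup H a K \<longleftrightarrow> add_submonoid K \<and> K \<subseteq> H \<and> multiples a \<inter> K = {0}"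

lemma avoiding_subgroup_adjoin:
  fixes a z :: "'a::{finite,ab_group_add}"
  assumes p: "prime p" and H: "add_submonoid H" and K: "avoiding_subgroup H a K"
    and zH: "z \<in> H" and pz: "ntimes p z \<in> K" and zM: "z \<notin> adjoin K a"
  shows "avoiding_subgroup H a (adjoin K z)" and "K \<subset> adjoin K z"
proof -
  have Ksub: "add_submonoid K" "K \<subseteq> H" and aK: "multiples a \<inter> K = {0}"
    using K unfolding avoiding_subgroup_def by auto
  show "avoiding_subgroup H a (adjoin K z)"
    unfolding avoiding_subgroup_def
    using add_submonoid_adjoin[OF Ksub(1)] adjoin_subset[OF H Ksub(2) zH]
      multiples_Int_adjoin[OF p Ksub(1) aK pz zM] by simp
  have "z \<in> adjoin K z"
    using adjoinI[OF add_submonoid_zero[OF Ksub(1)], of 1 z] by simp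
  then show "K \<subset> adjoin K z"
    using zM subset_adjoin by blast
qed

text \<open>The classical complement argument: a subgroup \<open>K\<close> maximal among those meeting \<open>\<langle>a\<rangle>\<close>
  trivially is closed under extraction of \<open>p\<close>-th roots in \<open>\<langle>a\<rangle> + K\<close>, because otherwise a root
  could be adjoined to \<open>K\<close>.\<close>

lemma adjoin_pth_root:
  fixes a :: "'a::{finite,ab_group_add}"
  assumes p: "prime p" and H: "add_submonoid H" and aH: "a \<in> H" and n: "n \<ge> 1"
    and exp: "\<forall>y\<in>H. ntimes (p ^ n) y = 0" and ord: "\<forall>m. ntimes m a = 0 \<longleftrightarrow> p ^ n dvd m"
    and K: "avoiding_subgroup H a K"
    and max: "\<And>K'. avoiding_subgroup H a K' \<Longrightarrow> K \<subseteq> K' \<Longrightarrow> K' = K"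
    and x: "x \<in> H" "ntimes p x \<in> adjoin K a"
  shows "x \<in> adjoin K a"
proof (rule ccontr)
  assume xM: "x \<notin> adjoin K a"
  have Ksub: "add_submonoid K" "K \<subseteq> H" and aK: "multiples a \<inter> K = {0}"
    using K unfolding avoiding_subgroup_def by auto
  obtain \<kappa> k where \<kappa>: "\<kappa> \<in> K" and pxk: "ntimes p x = \<kappa> + ntimes k a"
    using x(2) by (rule adjoinE)
  have pn: "p ^ n = p ^ (n - 1) * p"
    using n by (metis Suc_diff_le diff_Suc_1 power_Suc2)
  have "0 = ntimes (p ^ n) x"
    using exp x(1) by simp
  also have "\<dots> = ntimes (p ^ (n - 1)) \<kappa> + ntimes (p ^ (n - 1) * k) a"
    by (simp add: pn ntimes_mult pxk ntimes_plus)
  finally have "ntimes (p ^ (n - 1) * k) a = - ntimes (p ^ (n - 1)) \<kappa>"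
    by (simp add: eq_neg_iff_add_eq_0 add.commute)
  also have "\<dots> \<in> K"
    using Ksub \<kappa> by (intro add_submonoid_uminus add_submonoid_ntimes)
  finally have "ntimes (p ^ (n - 1) * k) a = 0"
    using aK by blast
  then have "p dvd k"
    using ord pn p prime_gt_0_nat by auto
  then obtain k' where k': "k = p * k'" ..
  define z where "z = x - ntimes k' a"
  have pz: "ntimes p z = \<kappa>"
    unfolding z_def by (simp add: ntimes_diff pxk k' ntimes_mult[symmetric])
  have zH: "z \<in> H"
    unfolding z_def using H x(1) aH by (intro add_submonoid_diff add_submonoid_ntimes)
  have zM: "z \<notin> adjoin K a"
  proof
    assume "z \<in> adjoin K a"
    then obtain \<mu> m where "\<mu> \<in> K" "z = \<mu> + ntimes m a"
      by (rule adjoinE)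
    then have "x = \<mu> + ntimes (m + k') a"
      unfolding z_def by (simp add: ntimes_add algebra_simps)
    with xM \<open>\<mu> \<in> K\<close> adjoinI show False by metis
  qed
  show False
    using avoiding_subgroup_adjoin[OF p H K zH _ zM] pz \<kappa> max by blast
qed

lemma complement_exists:
  fixes a :: "'a::{finite,ab_group_add}"
  assumes p: "prime p" and H: "add_submonoid H" and aH: "a \<in> H" and n: "n \<ge> 1"
    and exp: "\<forall>y\<in>H. ntimes (p ^ n) y = 0" and ord: "\<forall>m. ntimes m a = 0 \<longleftrightarrow> p ^ n dvd m"
  shows "\<exists>K. avoiding_subgroup H a K \<and> H \<subseteq> adjoin K a"
proof -
  have "avoiding_subgroup H a {0}"
    unfolding avoiding_subgroup_def add_submonoid_def using add_submonoid_zero[OF H]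
    by (auto intro: range_eqI[of _ _ 0])
  moreover have "\<forall>K. avoiding_subgroup H a K \<longrightarrow> card K < Suc (card (UNIV :: 'a set))"
    by (simp add: card_mono le_imp_less_Suc)
  ultimately obtain K where K: "avoiding_subgroup H a K"
    and Kmax: "\<And>K'. avoiding_subgroup H a K' \<Longrightarrow> card K' \<le> card K"
    using Lattices_Big.ex_has_greatest_nat[of "avoiding_subgroup H a" "{0}" card] by blast
  have max: "K' = K" if "avoiding_subgroup H a K'" "K \<subseteq> K'" for K'
    using Kmax[OF that(1)] that(2) by (metis card_mono card_subset_eq finite le_antisym)
  have "y \<in> adjoin K a" if "y \<in> H" "ntimes (p ^ j) y \<in> adjoin K a" for j y
    using that
  proof (induct j arbitrary: y)
    case (Suc j)
    have "ntimes p (ntimes (p ^ j) y) \<in> adjoin K a"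
      using Suc.prems(2) by (simp add: ntimes_mult[symmetric] mult.commute)
    then have "ntimes (p ^ j) y \<in> adjoin K a"
      using adjoin_pth_root[OF p H aH n exp ord K max] Suc.prems(1) H
      by (blast intro: add_submonoid_ntimes)
    then show ?case
      using Suc by blast
  qed simp
  moreover have "0 \<in> adjoin K a"
    using K unfolding avoiding_subgroup_def by (blast intro: add_submonoid_zero add_submonoid_adjoin)
  ultimately have "H \<subseteq> adjoin K a"
    using exp by (metis subsetI)
  with K show ?thesis by blast
qed

definition p_basis :: "nat \<Rightarrow> 'a::ab_group_add set \<Rightarrow> nat \<Rightarrow> (nat \<Rightarrow> 'a) \<Rightarrow> (nat \<Rightarrow> nat) \<Rightarrow> bool"
  where "p_basis p H r e \<alpha> \<longleftrightarrow>
    (\<forall>j<r. e j \<in> H \<and> ntimes (p ^ \<alpha> j) (e j) = 0) \<and>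
    (\<forall>g\<in>H. \<exists>c. g = (\<Sum>j<r. ntimes (c j) (e j))) \<and>
    (\<forall>c. (\<forall>j<r. c j < p ^ \<alpha> j) \<and> (\<Sum>j<r. ntimes (c j) (e j)) = 0 \<longrightarrow> (\<forall>j<r. c j = 0))"

lemma sum_lessThan_fun_upd: "(\<Sum>j<(r::nat). f j ((c(r := x)) j)) = (\<Sum>j<r. f j (c j))"
  by (rule sum.cong) auto

lemma sum_lessThan_Suc_fun_upd:
  "(\<Sum>j<Suc r. ntimes (c j) ((e(r := a)) j)) = (\<Sum>j<r. ntimes (c j) (e j)) + ntimes (c r) a"
  using sum_lessThan_fun_upd[where f="\<lambda>j. ntimes (c j)" and c=e and x=a] by simp

lemma independent_adjoin:
  fixes a :: "'a::{finite,ab_group_add}"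
  assumes K: "avoiding_subgroup H a K" and e: "\<forall>j<r. e j \<in> K"
    and indep: "\<forall>c. (\<forall>j<r. c j < p ^ \<alpha> j) \<and> (\<Sum>j<r. ntimes (c j) (e j)) = 0 \<longrightarrow> (\<forall>j<r. c j = 0)"
    and ord: "\<forall>m. ntimes m a = 0 \<longleftrightarrow> p ^ n dvd m"
    and c: "\<forall>j<Suc r. c j < p ^ (\<alpha>(r := n)) j" "(\<Sum>j<Suc r. ntimes (c j) ((e(r := a)) j)) = 0"
  shows "\<forall>j<Suc r. c j = 0"
proof -
  have Ksub: "add_submonoid K" and aK: "multiples a \<inter> K = {0}"
    using K unfolding avoiding_subgroup_def by auto
  let ?\<kappa> = "\<Sum>j<r. ntimes (c j) (e j)"
  have "ntimes (c r) a = - ?\<kappa>"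
    using c(2) unfolding sum_lessThan_Suc_fun_upd by (simp add: eq_neg_iff_add_eq_0 add.commute)
  also have "\<dots> \<in> K"
    using e by (intro add_submonoid_uminus[OF Ksub] add_submonoid_sum[OF Ksub]
        add_submonoid_ntimes[OF Ksub]) auto
  finally have "ntimes (c r) a = 0"
    using aK by blast
  moreover have "c r < p ^ n"
    using c(1) by auto
  ultimately have cr: "c r = 0"
    using ord by (metis gr0I nat_dvd_not_less)
  moreover have "\<forall>j<r. c j < p ^ \<alpha> j"
    using c(1) by (auto dest: less_SucI)
  ultimately have "\<forall>j<r. c j = 0"
    using c(2) indep unfolding sum_lessThan_Suc_fun_upd by simp
  with cr show ?thesis
    by (auto simp: less_Suc_eq)
qed

lemma p_basis_adjoin:
  fixes a :: "'a::{finite,ab_group_add}"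
  assumes B: "p_basis p K r e \<alpha>" and K: "avoiding_subgroup H a K"
    and HK: "H \<subseteq> adjoin K a" and aH: "a \<in> H" and ord: "\<forall>m. ntimes m a = 0 \<longleftrightarrow> p ^ n dvd m"
  shows "p_basis p H (Suc r) (e(r := a)) (\<alpha>(r := n))"
proof -
  have KH: "K \<subseteq> H"
    using K unfolding avoiding_subgroup_def by auto
  have e: "\<forall>j<r. e j \<in> K \<and> ntimes (p ^ \<alpha> j) (e j) = 0"
    and gen: "\<forall>g\<in>K. \<exists>c. g = (\<Sum>j<r. ntimes (c j) (e j))"
    and indep: "\<forall>c. (\<forall>j<r. c j < p ^ \<alpha> j) \<and> (\<Sum>j<r. ntimes (c j) (e j)) = 0 \<longrightarrow> (\<forall>j<r. c j = 0)"
    using B by (simp_all add: p_basis_def)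
  have orders: "\<forall>j<Suc r. (e(r := a)) j \<in> H \<and> ntimes (p ^ (\<alpha>(r := n)) j) ((e(r := a)) j) = 0"
    using e KH aH ord by (auto simp: less_Suc_eq)
  have spans: "\<forall>g\<in>H. \<exists>c. g = (\<Sum>j<Suc r. ntimes (c j) ((e(r := a)) j))"
  proof
    fix g assume "g \<in> H"
    obtain \<kappa> m where "\<kappa> \<in> K" "g = \<kappa> + ntimes m a"
      using HK \<open>g \<in> H\<close> by (blast elim: adjoinE)
    moreover obtain c where "\<kappa> = (\<Sum>j<r. ntimes (c j) (e j))"
      using gen \<open>\<kappa> \<in> K\<close> by blast
    ultimately have "g = (\<Sum>j<Suc r. ntimes ((c(r := m)) j) ((e(r := a)) j))"
      unfolding sum_lessThan_Suc_fun_upd using sum_lessThan_fun_upd[where f="\<lambda>j x. ntimes x (e j)" and c=c and x=m]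
      by simp
    then show "\<exists>c. g = (\<Sum>j<Suc r. ntimes (c j) ((e(r := a)) j))" by blast
  qed
  have independent: "\<forall>c. (\<forall>j<Suc r. c j < p ^ (\<alpha>(r := n)) j) \<and>
      (\<Sum>j<Suc r. ntimes (c j) ((e(r := a)) j)) = 0 \<longrightarrow> (\<forall>j<Suc r. c j = 0)"
    using independent_adjoin[OF K _ indep ord] e by blast
  show ?thesis
    unfolding p_basis_def by (intro conjI orders spans independent)
qed

lemma ex_element_of_exponent_order:
  fixes H :: "'a::ab_group_add set"
  assumes p: "prime p" and exp: "\<forall>x::'a. ntimes (p ^ k) x = 0"
    and H: "add_submonoid H" and nontrivial: "H \<noteq> {0}"
  shows "\<exists>a n. a \<in> H \<and> n \<ge> 1 \<and> (\<forall>x\<in>H. ntimes (p ^ n) x = 0) \<and> (\<forall>m. ntimes m a = 0 \<longleftrightarrow> p ^ n dvd m)"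
proof -
  have ex: "\<exists>n. \<forall>x\<in>H. ntimes (p ^ n) x = 0"
    using exp by blast
  define n where "n = (LEAST n. \<forall>x\<in>H. ntimes (p ^ n) x = 0)"
  have Hexp: "\<forall>x\<in>H. ntimes (p ^ n) x = 0"
    unfolding n_def by (rule LeastI_ex[OF ex])
  have n: "n \<ge> 1"
    using Hexp nontrivial add_submonoid_zero[OF H] by (cases n) auto
  have "\<not> (\<forall>x\<in>H. ntimes (p ^ (n - 1)) x = 0)"
    using Least_le[of "\<lambda>n. \<forall>x\<in>H. ntimes (p ^ n) x = 0" "n - 1"] n unfolding n_def by fastforce
  then obtain a where "a \<in> H" and "ntimes (p ^ (n - 1)) a \<noteq> 0"
    by blast
  then show ?thesis
    using ntimes_eq_0_iff_dvd[OF p] Hexp n by blast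
qed

text \<open>Every subgroup of a finite abelian \<open>p\<close>-group has a basis: split off the cyclic group
  generated by an element of maximal order \<open>p\<^sup>n\<close> and recurse into its complement.\<close>

lemma p_basis_exists:
  fixes H :: "'a::{finite,ab_group_add} set"
  assumes p: "prime p" and exp: "\<forall>x::'a. ntimes (p ^ k) x = 0" and H: "add_submonoid H"
  shows "\<exists>r e \<alpha>. p_basis p H r e \<alpha>"
  using H
proof (induct "card H" arbitrary: H rule: less_induct)
  case less
  show ?case
  proof (cases "H = {0}")
    case True
    then have "p_basis p H 0 (\<lambda>_. 0) (\<lambda>_. 0)"
      unfolding p_basis_def by simp
    then show ?thesis by blast
  next
    case False
    obtain a n where aH: "a \<in> H" and n: "n \<ge> 1" and Hexp: "\<forall>x\<in>H. ntimes (p ^ n) x = 0"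
      and ord: "\<forall>m. ntimes m a = 0 \<longleftrightarrow> p ^ n dvd m"
      using ex_element_of_exponent_order[OF p exp less.prems False] by blast
    obtain K where K: "avoiding_subgroup H a K" and HK: "H \<subseteq> adjoin K a"
      using complement_exists[OF p less.prems aH n Hexp ord] by blast
    have "a \<in> multiples a"
      using rangeI[of "\<lambda>m. ntimes m a" 1] by simp
    moreover have "\<not> p ^ n dvd 1"
      using n prime_gt_1_nat[OF p] by simp
    then have "a \<noteq> 0"
      using ord[rule_format, of 1] by auto
    ultimately have "a \<notin> K"
      using K unfolding avoiding_subgroup_def by blast
    then have "card K < card H"
      using K aH unfolding avoiding_subgroup_def by (metis finite psubsetI psubset_card_mono)
    moreover have "add_submonoid K"
      using K unfolding avoiding_subgroup_def by blast
    ultimately obtain r e \<alpha> where "p_basis p K r e \<alpha>"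
      using less.hyps by blast
    then show ?thesis
      using p_basis_adjoin[OF _ K HK aH ord] by (intro exI)
  qed
qed

section \<open>Olson's theorem\<close>

lemma dvd_power_diff:
  fixes x y :: "'r::comm_ring_1"
  shows "c dvd x - y \<Longrightarrow> c dvd x ^ n - y ^ n"
  by (simp add: power_diff_sumr2)

lemma prime_dvd_add_power_sub:
  fixes a b :: "'r::comm_ring_1"
  assumes p: "prime p"
  shows "of_nat p dvd (a + b) ^ p - (a ^ p + b ^ p)"
proof -
  have "(a + b) ^ p = (\<Sum>k\<le>p. of_nat (p choose k) * a ^ k * b ^ (p - k))"
    by (rule binomial_ring)
  also have "\<dots> = (\<Sum>k<p. of_nat (p choose k) * a ^ k * b ^ (p - k)) + a ^ p"
    by (simp add: lessThan_Suc_atMost[symmetric])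
  also have "(\<Sum>k<p. of_nat (p choose k) * a ^ k * b ^ (p - k)) =
      b ^ p + (\<Sum>k\<in>{1..<p}. of_nat (p choose k) * a ^ k * b ^ (p - k))"
    using prime_gt_0_nat[OF p] by (simp add: lessThan_atLeast0 sum.atLeast_Suc_lessThan)
  finally have "(a + b) ^ p - (a ^ p + b ^ p) = (\<Sum>k\<in>{1..<p}. of_nat (p choose k) * a ^ k * b ^ (p - k))"
    by (simp add: algebra_simps)
  also have "of_nat p dvd \<dots>"
  proof (rule dvd_sum)
    fix k assume "k \<in> {1..<p}"
    then have "p dvd p choose k"
      using p by (intro dvd_choose_prime) auto
    then obtain q where "p choose k = p * q" ..
    then show "of_nat p dvd of_nat (p choose k) * a ^ k * b ^ (p - k)"
      by (simp add: mult.assoc)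
  qed
  finally show ?thesis .
qed

lemma prime_dvd_add_prime_power_sub:
  fixes a b :: "'r::comm_ring_1"
  assumes p: "prime p"
  shows "of_nat p dvd (a + b) ^ (p ^ k) - (a ^ (p ^ k) + b ^ (p ^ k))"
proof (induct k)
  case (Suc k)
  let ?A = "(a + b) ^ (p ^ k)" and ?B = "a ^ (p ^ k) + b ^ (p ^ k)"
  have "of_nat p dvd ?A ^ p - ?B ^ p"
    using Suc by (rule dvd_power_diff)
  moreover have "of_nat p dvd ?B ^ p - ((a ^ (p ^ k)) ^ p + (b ^ (p ^ k)) ^ p)"
    using p by (rule prime_dvd_add_power_sub)
  ultimately have "of_nat p dvd (?A ^ p - ?B ^ p) + (?B ^ p - ((a ^ (p ^ k)) ^ p + (b ^ (p ^ k)) ^ p))"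
    by (rule dvd_add)
  also have "(?A ^ p - ?B ^ p) + (?B ^ p - ((a ^ (p ^ k)) ^ p + (b ^ (p ^ k)) ^ p)) =
      (a + b) ^ (p ^ Suc k) - (a ^ (p ^ Suc k) + b ^ (p ^ Suc k))"
    by (simp add: power_mult[symmetric] mult.commute)
  finally show ?case .
qed simp

lemma one_minus_prod_power:
  fixes u :: "nat \<Rightarrow> 'r::comm_ring_1"
  shows "\<exists>s. 1 - (\<Prod>j<r. u j ^ c j) = (\<Sum>j<r. s j * (1 - u j))"
proof (induct r)
  case (Suc r)
  then obtain s where s: "1 - (\<Prod>j<r. u j ^ c j) = (\<Sum>j<r. s j * (1 - u j))" ..
  let ?P = "\<Prod>j<r. u j ^ c j" and ?t = "\<Sum>i<c r. u r ^ i"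
  have "1 - (\<Prod>j<Suc r. u j ^ c j) = (1 - ?P) + ?P * (1 - u r ^ c r)"
    by (simp add: algebra_simps)
  also have "\<dots> = (\<Sum>j<r. (s(r := ?P * ?t)) j * (1 - u j)) + (s(r := ?P * ?t)) r * (1 - u r)"
    using s one_diff_power_eq[of "u r" "c r"] by (simp add: sum_lessThan_fun_upd mult_ac)
  finally show ?case
    by (intro exI[of _ "s(r := ?P * ?t)"]) simp
qed simp

lemma dvd_monomial:
  fixes y :: "nat \<Rightarrow> 'r::comm_semiring_1"
  assumes y: "\<forall>j<r. d dvd y j ^ m j" and big: "(\<Sum>j<r. m j - 1) < (\<Sum>j<r. b j)"
  shows "d dvd (\<Prod>j<r. y j ^ b j)"
proof -
  obtain j where j: "j < r" "m j \<le> b j"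
  proof (rule ccontr)
    assume "\<not> thesis"
    then have "(\<Sum>j<r. b j) \<le> (\<Sum>j<r. m j - 1)"
      using that by (intro sum_mono) force
    with big show False by simp
  qed
  have "d dvd y j ^ b j"
    using y j by (blast intro: dvd_trans le_imp_power_dvd)
  also have "\<dots> dvd (\<Prod>j<r. y j ^ b j)"
    using j(1) by (intro dvd_prodI) auto
  finally show ?thesis .
qed

text \<open>The ring-theoretic pigeonhole principle behind Olson's theorem: a product of more than
  \<open>\<Sum>j<r. m j - 1\<close> elements of the ideal generated by the \<open>y j\<close> expands into monomials each of
  which has some factor \<open>y j ^ m j\<close>.\<close>

lemma dvd_monomial_mult_prod:
  fixes y :: "nat \<Rightarrow> 'r::comm_ring_1" and z :: "'i \<Rightarrow> 'r"
  assumes y: "\<forall>j<r. d dvd y j ^ m j" and J: "finite J"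
    and z: "\<forall>i\<in>J. \<exists>s. z i = (\<Sum>j<r. s j * y j)"
    and big: "(\<Sum>j<r. m j - 1) < (\<Sum>j<r. b j) + card J"
  shows "d dvd (\<Prod>j<r. y j ^ b j) * prod z J"
  using J z big
proof (induct J arbitrary: b rule: finite_induct)
  case empty
  then show ?case
    using dvd_monomial[OF y] by simp
next
  case (insert i J)
  obtain s where s: "z i = (\<Sum>j<r. s j * y j)"
    using insert.prems by blast
  have bump: "(\<Prod>l<r. y l ^ (b l + of_bool (l = j))) = (\<Prod>l<r. y l ^ b l) * y j"
    and sum_bump: "(\<Sum>l<r. b l + of_bool (l = j)) = (\<Sum>l<r. b l) + 1" if "j < r" for j
  proof -
    have "(\<Prod>l<r. y l ^ of_bool (l = j)) = (\<Prod>l<r. if l = j then y l else 1)"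
      by (rule prod.cong) auto
    then show "(\<Prod>l<r. y l ^ (b l + of_bool (l = j))) = (\<Prod>l<r. y l ^ b l) * y j"
      using that by (simp add: power_add prod.distrib)
    show "(\<Sum>l<r. b l + of_bool (l = j)) = (\<Sum>l<r. b l) + 1"
      using that by (simp add: sum.distrib)
  qed
  have "(\<Prod>j<r. y j ^ b j) * prod z (insert i J) =
      (\<Sum>j<r. s j * ((\<Prod>l<r. y l ^ (b l + of_bool (l = j))) * prod z J))"
    using insert.hyps by (simp add: s bump sum_distrib_left sum_distrib_right mult_ac)
  also have "d dvd \<dots>"
  proof (rule dvd_sum)
    fix j assume "j \<in> {..<r}"
    then have "d dvd (\<Prod>l<r. y l ^ (b l + of_bool (l = j))) * prod z J"
      using insert sum_bump by simp
    then show "d dvd s j * ((\<Prod>l<r. y l ^ (b l + of_bool (l = j))) * prod z J)"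
      by (rule dvd_mult)
  qed
  finally show ?case .
qed

text \<open>\<open>X g\<close> is the basis element \<open>X\<^sup>g\<close> of the group ring \<open>\<int>[G]\<close>.\<close>

definition X :: "'a::comm_monoid_add \<Rightarrow> 'a \<Rightarrow>\<^sub>0 int" where
  "X g = Poly_Mapping.single g 1"

lemma X_zero [simp]: "X 0 = 1"
  by (simp add: X_def)

lemma X_add: "X (g + h) = X g * X h"
  by (simp add: X_def mult_single)

lemma X_sum: "X (sum f A) = (\<Prod>a\<in>A. X (f a))"
  by (induct A rule: infinite_finite_induct) (simp_all add: X_add)

lemma X_ntimes: "X (ntimes n g) = X g ^ n"
  by (induct n) (simp_all add: X_add)

lemma lookup_prod_one_minus_X:
  assumes J: "finite J"
  shows "Poly_Mapping.lookup (\<Prod>i\<in>J. 1 - X (x i)) 0 = (\<Sum>I | I \<subseteq> J \<and> sum x I = 0. (-1) ^ card I)"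
proof -
  have "(\<Prod>i\<in>J. 1 - X (x i)) = (\<Prod>i\<in>J. Poly_Mapping.single (x i) (-1) + 1)"
    by (simp add: X_def single_uminus)
  also have "\<dots> = (\<Sum>I\<in>Pow J. (\<Prod>i\<in>I. Poly_Mapping.single (x i) (-1)) * (\<Prod>_\<in>J - I. 1))"
    using J by (rule prod_add)
  also have "\<dots> = (\<Sum>I\<in>Pow J. Poly_Mapping.single (sum x I) ((-1) ^ card I))"
  proof (rule sum.cong[OF refl])
    fix I assume "I \<in> Pow J"
    then have "finite I"
      using J finite_subset by blast
    then have "(\<Prod>i\<in>I. Poly_Mapping.single (x i) (-1)) = Poly_Mapping.single (sum x I) ((-1 :: int) ^ card I)"
      by (induct I rule: finite_induct) (simp_all add: mult_single)
    then show "(\<Prod>i\<in>I. Poly_Mapping.single (x i) (-1)) * (\<Prod>_\<in>J - I. 1) =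
        Poly_Mapping.single (sum x I) ((-1 :: int) ^ card I)"
      by simp
  qed
  finally have "Poly_Mapping.lookup (\<Prod>i\<in>J. 1 - X (x i)) 0 =
      (\<Sum>I\<in>Pow J. if sum x I = 0 then (-1) ^ card I else 0)"
    by (simp add: lookup_sum lookup_single when_def)
  also have "\<dots> = (\<Sum>I\<in>{I \<in> Pow J. sum x I = 0}. (-1) ^ card I)"
    by (rule sum.inter_filter[symmetric]) (simp add: J)
  also have "{I \<in> Pow J. sum x I = 0} = {I. I \<subseteq> J \<and> sum x I = 0}"
    by auto
  finally show ?thesis .
qed

text \<open>In \<open>\<int>[G]\<close>, \<open>y j = 1 - X (e j)\<close> satisfies \<open>p dvd y j ^ p ^ \<alpha> j\<close> by the Frobenius congruence,
  every \<open>1 - X g\<close> lies in the ideal generated by the \<open>y j\<close>, and the coefficient of \<open>X 0\<close> in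
  \<open>\<Prod>i\<in>J. 1 - X (x i)\<close> is the alternating count.\<close>

lemma prime_dvd_alternating_zero_sum_count:
  fixes e :: "nat \<Rightarrow> 'a::ab_group_add" and x :: "'i \<Rightarrow> 'a"
  assumes p: "prime p" and e: "\<forall>j<r. ntimes (p ^ \<alpha> j) (e j) = 0"
    and gen: "\<forall>g. \<exists>c. g = (\<Sum>j<r. ntimes (c j) (e j))"
    and J: "finite J" and big: "(\<Sum>j<r. p ^ \<alpha> j - 1) < card J"
  shows "int p dvd (\<Sum>I | I \<subseteq> J \<and> sum x I = 0. (-1) ^ card I)"
proof -
  define y where "y j = 1 - X (e j)" for j
  have "of_nat p dvd y j ^ (p ^ \<alpha> j)" if "j < r" for j
  proof -
    have "X (e j) ^ (p ^ \<alpha> j) = 1"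
      using e that by (simp flip: X_ntimes)
    then show ?thesis
      using prime_dvd_add_prime_power_sub[OF p, of "y j" "X (e j)" "\<alpha> j"]
      by (simp add: y_def)
  qed
  moreover have "\<exists>s. 1 - X (x i) = (\<Sum>j<r. s j * y j)" for i
  proof -
    obtain c where "x i = (\<Sum>j<r. ntimes (c j) (e j))"
      using gen by blast
    then have "X (x i) = (\<Prod>j<r. X (e j) ^ c j)"
      by (simp add: X_sum X_ntimes)
    then show ?thesis
      unfolding y_def by (simp add: one_minus_prod_power)
  qed
  ultimately have "of_nat p dvd (\<Prod>j<r. y j ^ 0) * (\<Prod>i\<in>J. 1 - X (x i))"
    using J big by (intro dvd_monomial_mult_prod[where m="\<lambda>j. p ^ \<alpha> j"]) auto
  then obtain h where "(\<Prod>i\<in>J. 1 - X (x i)) = of_nat p * h"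
    by auto
  moreover have "Poly_Mapping.lookup (of_nat n * h) 0 = int n * Poly_Mapping.lookup h 0" for n
    by (induct n) (simp_all add: distrib_right lookup_add)
  ultimately have "Poly_Mapping.lookup (\<Prod>i\<in>J. 1 - X (x i)) 0 = int p * Poly_Mapping.lookup h 0"
    by simp
  then show ?thesis
    using lookup_prod_one_minus_X[OF J, of x] by simp
qed

lemma subseteq_sum_replicate_mset:
  fixes e :: "nat \<Rightarrow> 'a::ab_group_add"
  assumes "U \<subseteq># (\<Sum>j<r. replicate_mset (m j) (e j))"
  shows "\<exists>c. (\<forall>j<r. c j \<le> m j) \<and> sum_mset U = (\<Sum>j<r. ntimes (c j) (e j)) \<and> size U = (\<Sum>j<r. c j)"
  using assms
proof (induct r arbitrary: U)
  case (Suc r)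
  let ?A = "\<Sum>j<r. replicate_mset (m j) (e j)"
  have "U - U \<inter># ?A \<subseteq># replicate_mset (m r) (e r)"
    unfolding subseteq_mset_def
  proof
    fix a
    have "count U a \<le> count ?A a + count (replicate_mset (m r) (e r)) a"
      using Suc.prems by (simp add: subseteq_mset_def)
    then show "count (U - U \<inter># ?A) a \<le> count (replicate_mset (m r) (e r)) a"
      by simp
  qed
  then obtain k where k: "k \<le> m r" "U - U \<inter># ?A = replicate_mset k (e r)"
    by (rule msubseteq_replicate_msetE)
  obtain c where c: "\<forall>j<r. c j \<le> m j" "sum_mset (U \<inter># ?A) = (\<Sum>j<r. ntimes (c j) (e j))"
    "size (U \<inter># ?A) = (\<Sum>j<r. c j)"
    using Suc.hyps[of "U \<inter># ?A"] by auto
  have U: "U = U \<inter># ?A + replicate_mset k (e r)"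
    using k(2) subset_mset.add_diff_inverse[of "U \<inter># ?A" U] by simp
  have "\<forall>j<Suc r. (c(r := k)) j \<le> m j"
    using c(1) k(1) by (simp add: less_Suc_eq)
  moreover have "sum_mset U = (\<Sum>j<Suc r. ntimes ((c(r := k)) j) (e j))"
    using c(2) by (subst U) (simp add: sum_mset_replicate_mset sum_lessThan_fun_upd)
  moreover have "size U = (\<Sum>j<Suc r. (c(r := k)) j)"
    using c(3) by (subst U) (simp add: sum_lessThan_fun_upd[where f="\<lambda>_ x. x"])
  ultimately show ?case
    by blast
qed simp

lemma ex_submset_of_indices:
  assumes "I \<subseteq> {..<length xs}"
  shows "\<exists>T. T \<subseteq># mset xs \<and> size T = card I \<and> sum_mset T = sum ((!) xs) I"
proof (intro exI conjI)
  have "mset xs = mset (map ((!) xs) [0..<length xs])"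
    by (simp add: map_nth)
  also have "\<dots> = image_mset ((!) xs) (mset_set {..<length xs})"
    by (simp add: mset_set_upto_eq_mset_upto)
  finally have "mset xs = image_mset ((!) xs) (mset_set {..<length xs})" .
  then show "image_mset ((!) xs) (mset_set I) \<subseteq># mset xs"
    using assms by (simp add: image_mset_subseteq_mono subset_imp_msubset_mset_set)
  show "size (image_mset ((!) xs) (mset_set I)) = card I"
    by simp
  show "sum_mset (image_mset ((!) xs) (mset_set I)) = sum ((!) xs) I"
    by (simp add: sum_unfold_sum_mset)
qed

lemma zero_sum_subseq_of_long:
  fixes e :: "nat \<Rightarrow> 'a::ab_group_add" and S :: "'a multiset"
  assumes p: "prime p" and e: "\<forall>j<r. ntimes (p ^ \<alpha> j) (e j) = 0"
    and gen: "\<forall>g. \<exists>c. g = (\<Sum>j<r. ntimes (c j) (e j))"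
    and S: "(\<Sum>j<r. p ^ \<alpha> j - 1) < size S"
  shows "\<exists>T. T \<subseteq># S \<and> T \<noteq> {#} \<and> zero_sum T"
proof (rule ccontr)
  assume none: "\<nexists>T. T \<subseteq># S \<and> T \<noteq> {#} \<and> zero_sum T"
  obtain xs where xs: "mset xs = S"
    using ex_mset by blast
  have "{I. I \<subseteq> {..<length xs} \<and> sum ((!) xs) I = 0} = {{}}"
  proof (intro equalityI subsetI)
    fix I assume I: "I \<in> {I. I \<subseteq> {..<length xs} \<and> sum ((!) xs) I = 0}"
    then obtain T where T: "T \<subseteq># S" "size T = card I" "zero_sum T"
      using ex_submset_of_indices[of I xs] xs by (auto simp: zero_sum_def)
    then have "card I = 0"
      using none by fastforce
    then show "I \<in> {{}}"
      using I finite_subset[of I "{..<length xs}"] by simp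
  qed simp
  moreover have "int p dvd (\<Sum>I | I \<subseteq> {..<length xs} \<and> sum ((!) xs) I = 0. (-1) ^ card I)"
    using S xs by (intro prime_dvd_alternating_zero_sum_count[OF p e gen]) auto
  ultimately show False
    using p by (simp add: prime_gt_1_nat)
qed

lemma zero_sum_free_of_p_basis:
  fixes e :: "nat \<Rightarrow> 'a::ab_group_add"
  assumes p: "prime p" and B: "p_basis p H r e \<alpha>"
  shows "\<exists>S :: 'a multiset. size S = (\<Sum>j<r. p ^ \<alpha> j - 1) \<and> (\<nexists>T. T \<subseteq># S \<and> T \<noteq> {#} \<and> zero_sum T)"
proof -
  let ?S = "\<Sum>j<r. replicate_mset (p ^ \<alpha> j - 1) (e j)"
  have "\<not> (T \<subseteq># ?S \<and> T \<noteq> {#} \<and> zero_sum T)" for T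
  proof
    assume T: "T \<subseteq># ?S \<and> T \<noteq> {#} \<and> zero_sum T"
    then obtain c where c: "\<forall>j<r. c j \<le> p ^ \<alpha> j - 1" "sum_mset T = (\<Sum>j<r. ntimes (c j) (e j))"
      "size T = (\<Sum>j<r. c j)"
      using subseteq_sum_replicate_mset[OF conjunct1[OF T]] by blast
    have "\<forall>j<r. c j < p ^ \<alpha> j"
      using c(1) prime_gt_0_nat[OF p] by (simp add: le_diff_conv2 Suc_le_eq)
    moreover have "(\<Sum>j<r. ntimes (c j) (e j)) = 0"
      using c(2) T by (simp add: zero_sum_def)
    ultimately have "\<forall>j<r. c j = 0"
      using B unfolding p_basis_def by blast
    then show False
      using c(3) T by simp
  qed
  moreover have "size ?S = (\<Sum>j<r. p ^ \<alpha> j - 1)"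
    by (induct r) simp_all
  ultimately show ?thesis
    by blast
qed

lemma davenport_p_basis:
  fixes e :: "nat \<Rightarrow> 'a::{finite,ab_group_add}"
  assumes p: "prime p" and B: "p_basis p UNIV r e \<alpha>"
  shows "davenport TYPE('a) = Suc (\<Sum>j<r. p ^ \<alpha> j - 1)"
  unfolding davenport_def
proof (rule Least_equality)
  let ?s = "\<Sum>j<r. p ^ \<alpha> j - 1"
  have e: "\<forall>j<r. ntimes (p ^ \<alpha> j) (e j) = 0" and gen: "\<forall>g. \<exists>c. g = (\<Sum>j<r. ntimes (c j) (e j))"
    using B by (simp_all add: p_basis_def)
  show "0 < Suc ?s \<and> (\<forall>S::'a multiset. Suc ?s \<le> size S \<longrightarrow> (\<exists>T. T \<subseteq># S \<and> T \<noteq> {#} \<and> zero_sum T))"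
    using zero_sum_subseq_of_long[OF p e gen] by (simp add: Suc_le_eq)
next
  fix t assume t: "0 < t \<and> (\<forall>S::'a multiset. t \<le> size S \<longrightarrow> (\<exists>T. T \<subseteq># S \<and> T \<noteq> {#} \<and> zero_sum T))"
  obtain S :: "'a multiset" where S: "size S = (\<Sum>j<r. p ^ \<alpha> j - 1)"
    and none: "\<nexists>T. T \<subseteq># S \<and> T \<noteq> {#} \<and> zero_sum T"
    using zero_sum_free_of_p_basis[OF p B] by blast
  show "Suc (\<Sum>j<r. p ^ \<alpha> j - 1) \<le> t"
  proof (rule ccontr)
    assume "\<not> Suc (\<Sum>j<r. p ^ \<alpha> j - 1) \<le> t"
    then have "t \<le> size S"
      using S by simp
    with t none show False
      by blast
  qed
qed

lemma alternating_zero_sum_count_dvd: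
  fixes x :: "'i \<Rightarrow> 'a::{finite,ab_group_add}"
  assumes p: "prime p" and G: "card (UNIV :: 'a set) = p ^ k"
    and J: "finite J" and D: "davenport TYPE('a) \<le> card J"
  shows "int p dvd (\<Sum>I | I \<subseteq> J \<and> sum x I = 0. (-1) ^ card I)"
proof -
  have "\<forall>y::'a. ntimes (p ^ k) y = 0"
    using ntimes_card_UNIV[where 'a='a] by (simp add: G)
  moreover have "add_submonoid (UNIV :: 'a set)"
    by (simp add: add_submonoid_def)
  ultimately obtain r e \<alpha> where B: "p_basis p (UNIV :: 'a set) r e \<alpha>"
    using p_basis_exists[OF p] by blast
  then have "(\<Sum>j<r. p ^ \<alpha> j - 1) < card J"
    using davenport_p_basis[OF p B] D by simp
  then show ?thesis
    using B J p unfolding p_basis_def by (intro prime_dvd_alternating_zero_sum_count) auto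
qed

section \<open>Zero-sum subsequences of long sequences\<close>

lemma card_supersets_of_card:
  assumes U: "finite U" and IU: "I \<subseteq> U" and s: "s \<le> card U"
  shows "card {J. J \<subseteq> U \<and> card J = s \<and> I \<subseteq> J} = (card U - card I) choose (card U - s)"
proof -
  have card_compl: "card (U - K) = card U - card K" if "K \<subseteq> U" for K
    using that U by (simp add: card_Diff_subset finite_subset)
  have "bij_betw (\<lambda>J. U - J) {J. J \<subseteq> U \<and> card J = s \<and> I \<subseteq> J} {K. K \<subseteq> U - I \<and> card K = card U - s}"
  proof (rule bij_betw_byWitness[where f'="\<lambda>K. U - K"])
    show "(\<lambda>J. U - J) ` {J. J \<subseteq> U \<and> card J = s \<and> I \<subseteq> J} \<subseteq> {K. K \<subseteq> U - I \<and> card K = card U - s}"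
      using card_compl by auto
    show "(\<lambda>K. U - K) ` {K. K \<subseteq> U - I \<and> card K = card U - s} \<subseteq> {J. J \<subseteq> U \<and> card J = s \<and> I \<subseteq> J}"
    proof (rule image_subsetI)
      fix K assume "K \<in> {K. K \<subseteq> U - I \<and> card K = card U - s}"
      then show "U - K \<in> {J. J \<subseteq> U \<and> card J = s \<and> I \<subseteq> J}"
        using card_compl[of K] s IU by auto
    qed
  qed auto
  then have "card {J. J \<subseteq> U \<and> card J = s \<and> I \<subseteq> J} = card {K. K \<subseteq> U - I \<and> card K = card U - s}"
    by (rule bij_betw_same_card)
  also have "\<dots> = (card U - card I) choose (card U - s)"
    using U IU by (simp add: n_subsets card_Diff_subset finite_subset)
  finally show ?thesis .
qed

lemma sum_subsets_of_card_sum_subsets: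
  fixes f :: "'i set \<Rightarrow> int"
  assumes U: "finite U" and s: "s \<le> card U"
  shows "(\<Sum>J | J \<subseteq> U \<and> card J = s. \<Sum>I | I \<subseteq> J \<and> P I. f I) =
         (\<Sum>I | I \<subseteq> U \<and> P I. f I * int ((card U - card I) choose (card U - s)))"
proof -
  have fin: "finite {J. J \<subseteq> U \<and> card J = s}" "finite {I. I \<subseteq> U \<and> P I}"
    using U by (auto intro: finite_subset[of _ "Pow U"])
  have "(\<Sum>J | J \<subseteq> U \<and> card J = s. \<Sum>I | I \<subseteq> J \<and> P I. f I) =
      (\<Sum>J | J \<subseteq> U \<and> card J = s. \<Sum>I | I \<in> {I. I \<subseteq> U \<and> P I} \<and> I \<subseteq> J. f I)"
    by (intro sum.cong refl arg_cong[where f="\<lambda>A. sum f A"]) auto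
  also have "\<dots> = (\<Sum>I | I \<subseteq> U \<and> P I. \<Sum>J | J \<in> {J. J \<subseteq> U \<and> card J = s} \<and> I \<subseteq> J. f I)"
    using fin by (rule sum.swap_restrict)
  also have "\<dots> = (\<Sum>I | I \<subseteq> U \<and> P I. f I * int ((card U - card I) choose (card U - s)))"
    using card_supersets_of_card[OF U _ s] by (intro sum.cong refl) (simp add: conj_assoc)
  finally show ?thesis .
qed

lemma binomial_linear_factor:
  "(c - int m) * int (m choose t) = (c - int t) * int (m choose t) - int (Suc t) * int (m choose Suc t)"
proof (cases "t \<le> m")
  case True
  have "Suc t * (m choose Suc t) = (m - t) * (m choose t)"
    by (simp only: binomial_absorption binomial_absorb_comp)
  then have "int (Suc t) * int (m choose Suc t) = (int m - int t) * int (m choose t)"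
    using True by (metis of_nat_diff of_nat_mult)
  then show ?thesis
    by (simp add: algebra_simps)
qed (simp add: binomial_eq_0)

text \<open>Each linear factor \<open>c - K I\<close> raises the binomial degree by at most one (lemma
  \<open>binomial_linear_factor\<close>), so a product of at most \<open>d - t\<close> of them stays within the hypothesis.\<close>

lemma dvd_sum_binomial_mult_prod:
  fixes W :: "'b \<Rightarrow> int" and K :: "'b \<Rightarrow> nat" and c :: "'l \<Rightarrow> int"
  assumes hyp: "\<forall>t\<le>d. q dvd (\<Sum>I\<in>Z. W I * int (K I choose t))"
    and L: "finite L" and t: "t + card L \<le> d"
  shows "q dvd (\<Sum>I\<in>Z. W I * int (K I choose t) * (\<Prod>l\<in>L. c l - int (K I)))"
  using L t
proof (induct L arbitrary: t rule: finite_induct)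
  case empty
  then show ?case
    using hyp by simp
next
  case (insert l L)
  let ?P = "\<lambda>I. \<Prod>l\<in>L. c l - int (K I)"
  let ?S = "\<lambda>t. \<Sum>I\<in>Z. W I * int (K I choose t) * ?P I"
  have "W I * int (K I choose t) * (\<Prod>l\<in>insert l L. c l - int (K I)) =
      W I * ?P I * ((c l - int (K I)) * int (K I choose t))" for I
    using insert.hyps by (simp add: mult_ac)
  also have "W I * ?P I * ((c l - int (K I)) * int (K I choose t)) =
      (c l - int t) * (W I * int (K I choose t) * ?P I) - int (Suc t) * (W I * int (K I choose Suc t) * ?P I)"
    for I
    unfolding binomial_linear_factor by (simp add: algebra_simps)
  finally have "(\<Sum>I\<in>Z. W I * int (K I choose t) * (\<Prod>l\<in>insert l L. c l - int (K I))) =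
      (c l - int t) * ?S t - int (Suc t) * ?S (Suc t)"
    by (simp add: sum_subtractf sum_distrib_left)
  also have "q dvd \<dots>"
    using insert by (intro dvd_diff dvd_mult) simp_all
  finally show ?case .
qed

text \<open>This is the key congruence: the sum ranges over all zero-sum index sets including the empty one, and
  it is divisible by \<open>p\<close> for every polynomial in \<open>|I|\<close> of degree less than \<open>i\<close>, because the
  binomial weights \<open>(n - |I|) choose t\<close>, \<open>t < i\<close>, count the supersets of \<open>I\<close> of size \<open>n - t \<ge> D(G)\<close>.\<close>

lemma weighted_zero_sum_count_dvd:
  fixes x :: "'i \<Rightarrow> 'a::{finite,ab_group_add}" and L :: "int set"
  assumes p: "prime p" and G: "card (UNIV :: 'a set) = p ^ k"
    and U: "finite U" "card U = davenport TYPE('a) + i - 1" and L: "finite L" "card L < i"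
  shows "int p dvd (\<Sum>I | I \<subseteq> U \<and> sum x I = 0. (-1) ^ card I * (\<Prod>l\<in>L. int (card I) - l))"
proof -
  let ?n = "card U" and ?Z = "{I. I \<subseteq> U \<and> sum x I = 0}"
  have binom: "int p dvd (\<Sum>I\<in>?Z. (-1) ^ card I * int ((?n - card I) choose t))" if "t \<le> card L" for t
  proof -
    have "(\<Sum>J | J \<subseteq> U \<and> card J = ?n - t. \<Sum>I | I \<subseteq> J \<and> sum x I = 0. (-1) ^ card I) =
        (\<Sum>I\<in>?Z. (-1) ^ card I * int ((?n - card I) choose t))"
      using U(1) that L(2) U(2) by (simp add: sum_subsets_of_card_sum_subsets)
    moreover have "int p dvd (\<Sum>J | J \<subseteq> U \<and> card J = ?n - t. \<Sum>I | I \<subseteq> J \<and> sum x I = 0. (-1) ^ card I)"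
      using that L(2) U by (intro dvd_sum alternating_zero_sum_count_dvd[OF p G])
        (auto intro: finite_subset)
    ultimately show ?thesis by simp
  qed
  have "int p dvd (\<Sum>I\<in>?Z. (-1) ^ card I * int ((?n - card I) choose 0) *
      (\<Prod>l\<in>L. (int ?n - l) - int (?n - card I)))"
    using binom L(1) by (intro dvd_sum_binomial_mult_prod[where d="card L"]) auto
  also have "(\<Sum>I\<in>?Z. (-1) ^ card I * int ((?n - card I) choose 0) * (\<Prod>l\<in>L. (int ?n - l) - int (?n - card I))) =
      (\<Sum>I\<in>?Z. (-1) ^ card I * (\<Prod>l\<in>L. int (card I) - l))"
    using U(1) by (intro sum.cong refl) (auto simp: of_nat_diff card_mono)
  finally show ?thesis .
qed

lemma ex_prime_dvd_of_zero_sum_lengths: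
  fixes S :: "'a::{finite,ab_group_add} multiset" and L :: "int set"
  assumes p: "prime p" and G: "card (UNIV :: 'a set) = p ^ k"
    and S: "size S = davenport TYPE('a) + i - 1" and L: "finite L" "card L < i"
    and lengths: "\<And>T. T \<subseteq># S \<Longrightarrow> T \<noteq> {#} \<Longrightarrow> zero_sum T \<Longrightarrow> int p dvd (\<Prod>l\<in>L. int (size T) - l)"
  shows "\<exists>l\<in>L. int p dvd l"
proof -
  obtain xs where xs: "mset xs = S"
    using ex_mset by blast
  let ?U = "{..<length xs}"
  let ?Z = "{I. I \<subseteq> ?U \<and> sum ((!) xs) I = 0}"
  let ?f = "\<lambda>I. (-1) ^ card I * (\<Prod>l\<in>L. int (card I) - l)"
  have "int p dvd sum ?f ?Z"
    using xs S L by (intro weighted_zero_sum_count_dvd[OF p G]) auto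
  moreover have "finite ?Z"
    by (rule finite_subset[of _ "Pow ?U"]) auto
  then have "sum ?f ?Z = ?f {} + sum ?f (?Z - {{}})"
    using sum.remove[of ?Z "{}" ?f] by simp
  moreover have "int p dvd sum ?f (?Z - {{}})"
  proof (rule dvd_sum)
    fix I assume I: "I \<in> ?Z - {{}}"
    then obtain T where "T \<subseteq># S" "size T = card I" "zero_sum T"
      using ex_submset_of_indices[of I xs] xs by (auto simp: zero_sum_def)
    moreover have "card I \<noteq> 0"
      using I finite_subset[of I ?U] by auto
    ultimately show "int p dvd ?f I"
      using lengths by (metis dvd_mult size_eq_0_iff_empty)
  qed
  ultimately have "int p dvd (\<Prod>l\<in>L. - l)"
    by (simp add: dvd_add_left_iff)
  then show ?thesis
    using p L(1) by (simp add: prime_dvd_prod_iff)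
qed

lemma dispersive_if_zero_sum_length_not_dvd:
  fixes S :: "'a::{finite,ab_group_add} multiset"
  assumes p: "prime p" and G: "card (UNIV :: 'a set) = p ^ k"
    and S: "size S = davenport TYPE('a) + i - 1" and i: "i \<ge> 2"
    and S': "S' \<subseteq># S" "zero_sum S'" "\<not> p dvd size S'"
  shows "dispersive S"
proof (rule ccontr)
  assume "\<not> dispersive S"
  moreover have "S' \<noteq> {#}"
    using S'(3) by auto
  ultimately have "size T = size S'" if "T \<subseteq># S" "T \<noteq> {#}" "zero_sum T" for T
    using that S' unfolding dispersive_def by blast
  then have "\<exists>l\<in>{int (size S')}. int p dvd l"
    using i by (intro ex_prime_dvd_of_zero_sum_lengths[OF p G S]) auto
  with S'(3) show False
    by simp
qed

lemma le_pred_prime_if_no_zero_sum_length_dvd: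
  fixes S :: "'a::{finite,ab_group_add} multiset"
  assumes p: "prime p" and G: "card (UNIV :: 'a set) = p ^ k"
    and S: "size S = davenport TYPE('a) + i - 1"
    and none: "\<nexists>T. T \<subseteq># S \<and> T \<noteq> {#} \<and> zero_sum T \<and> p dvd size T"
  shows "i \<le> p - 1"
proof (rule ccontr)
  assume "\<not> i \<le> p - 1"
  then have "card {1..<int p} < i"
    by simp
  moreover have "int p dvd (\<Prod>l\<in>{1..<int p}. int (size T) - l)"
    if "T \<subseteq># S" "T \<noteq> {#}" "zero_sum T" for T
  proof -
    have "\<not> p dvd size T"
      using none that by blast
    then have "size T mod p \<in> {1..<p}"
      using p prime_gt_0_nat by (simp add: dvd_eq_mod_eq_0 Suc_le_eq)
    then have "int (size T mod p) \<in> {1..<int p}"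
      by auto
    moreover have "int p dvd int (size T) - int (size T mod p)"
      by (simp add: of_nat_mod zmod_int dvd_minus_mod)
    ultimately show ?thesis
      by (meson dvd_prodI dvd_trans finite_atLeastLessThan_int)
  qed
  ultimately obtain l where "l \<in> {1..<int p}" "int p dvd l"
    using ex_prime_dvd_of_zero_sum_lengths[OF p G S, of "{1..<int p}"] by auto
  then show False
    using zdvd_imp_le by fastforce
qed

lemma card_zero_sum_lengths_ge_if_no_zero_sum_length_dvd:
  fixes S :: "'a::{finite,ab_group_add} multiset"
  assumes p: "prime p" and G: "card (UNIV :: 'a set) = p ^ k"
    and S: "size S = davenport TYPE('a) + i - 1"
    and none: "\<nexists>T. T \<subseteq># S \<and> T \<noteq> {#} \<and> zero_sum T \<and> p dvd size T"
  shows "i \<le> card {size T | T. T \<subseteq># S \<and> T \<noteq> {#} \<and> zero_sum T}"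
proof (rule ccontr)
  let ?lengths = "{size T | T. T \<subseteq># S \<and> T \<noteq> {#} \<and> zero_sum T}"
  assume "\<not> i \<le> card ?lengths"
  moreover have "finite ?lengths"
    by (rule finite_subset[of _ "{..size S}"]) (auto intro: size_mset_mono)
  moreover have "int p dvd (\<Prod>l\<in>int ` ?lengths. int (size T) - l)"
    if "T \<subseteq># S" "T \<noteq> {#}" "zero_sum T" for T
  proof -
    have "(\<Prod>l\<in>int ` ?lengths. int (size T) - l) = 0"
      using that \<open>finite ?lengths\<close> by (auto intro!: prod_zero)
    then show ?thesis by simp
  qed
  ultimately have "\<exists>l\<in>int ` ?lengths. int p dvd l"
    using ex_prime_dvd_of_zero_sum_lengths[OF p G S, of "int ` ?lengths"]
    by (simp add: card_image)
  with none show False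
    by auto
qed

theorem corollary2p4:
  fixes p i :: nat and S :: "'a::{finite,ab_group_add} multiset"
  assumes "prime p"
    and "\<exists>k. card (UNIV :: 'a set) = p ^ k"
    and "i \<ge> 1"
    and "size S = davenport TYPE('a) + i - 1"
  shows "(i \<ge> 2 \<and> (\<exists>S'. S' \<subseteq># S \<and> zero_sum S' \<and> \<not> p dvd size S') \<longrightarrow> dispersive S)
       \<and> ((\<not> (\<exists>S'. S' \<subseteq># S \<and> S' \<noteq> {#} \<and> zero_sum S' \<and> p dvd size S')) \<longrightarrow>
           i \<le> p - 1 \<and>
           i \<le> card {size T | T. T \<subseteq># S \<and> T \<noteq> {#} \<and> zero_sum T})"
proof -
  obtain k where G: "card (UNIV :: 'a set) = p ^ k"
    using assms(2) by blast
  show ?thesis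
    using dispersive_if_zero_sum_length_not_dvd[OF assms(1) G assms(4)]
      le_pred_prime_if_no_zero_sum_length_dvd[OF assms(1) G assms(4)]
      card_zero_sum_lengths_ge_if_no_zero_sum_length_dvd[OF assms(1) G assms(4)]
    by blast
qed

end
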